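(* Let $\mathbb{A}$ be a 2-category, let $p_0:e\to b_0$ and $p_1:e\to b_1$ be 1-cells of $\mathbb{A}$, and suppose $\mathbb{A}$ has an opcomma object $(p_0\uparrow p_1,\delta^0,\delta^1,\alpha)$ of $p_1$ along $p_0$. For every 1-cell $h:p_0\uparrow p_1\to y$ of $\mathbb{A}$ the following statements are equivalent: (i) the pair $(h,\ \mathrm{id}_{h\delta^0})$ is a right Kan extension of $h\delta^0$ along $\delta^0$; (ii) the pair $(h\delta^1,\ \mathrm{id}_h\ast\alpha)$ is a right Kan extension of $h\delta^0p_1$ along $p_0$.
   Context: A 2-category is a $\mathbf{Cat}$-enriched category; in it, composition of 1-cells is written by juxtaposition, vertical composition of 2-cells by $\cdot$, horizontal composition by $\ast$, and $\mathrm{id}_f$ is the identity 2-cell on a 1-cell $f$. An opcomma object of $p_1$ along $p_0$ is an object $p_0\uparrow p_1$ with 1-cells $\delta^0:b_1\to p_0\uparrow p_1$, $\delta^1:b_0\to p_0\uparrow p_1$ and a 2-cell $\alpha:\delta^1p_0\Rightarrow\delta^0p_1$ such that, for every object $y$, the functor $h\mapsto(h\delta^0,h\delta^1,\mathrm{id}_h\ast\alpha)$, $\xi\mapsto(\xi\ast\mathrm{id}_{\delta^0},\xi\ast\mathrm{id}_{\delta^1})$ is an isomorphism from $\mathbb{A}(p_0\uparrow p_1,y)$ onto the category whose objects are triples $(h_0:b_1\to y,\ h_1:b_0\to y,\ \beta:h_1p_0\Rightarrow h_0p_1)$ and whose morphisms $(h_0,h_1,\beta)\to(h_0',h_1',\beta')$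 are pairs of 2-cells $\xi_0:h_0\Rightarrow h_0'$, $\xi_1:h_1\Rightarrow h_1'$ with $(\xi_0\ast\mathrm{id}_{p_1})\cdot\beta=\beta'\cdot(\xi_1\ast\mathrm{id}_{p_0})$. A right Kan extension of $f:z\to y$ along $g:z\to x$ is a pair $(r:x\to y,\ \gamma:rg\Rightarrow f)$ such that for every 1-cell $k:x\to y$ the assignment $\beta\mapsto\gamma\cdot(\beta\ast\mathrm{id}_g)$ is a bijection from 2-cells $k\Rightarrow r$ to 2-cells $kg\Rightarrow f$. *)

theory Defs
  imports Main
begin

text \<open>Composition of 1-cells is in applicative order: comp1 g f is "g f" = g after f.
  vcomp b a is "b \<cdot> a" (a first), hcomp x y is "x \<ast> y".\<close>

record ('o, 'a, 'c) twocat =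
  obj   :: "'o set"
  hom1  :: "'o \<Rightarrow> 'o \<Rightarrow> 'a set"
  hom2  :: "'a \<Rightarrow> 'a \<Rightarrow> 'c set"
  id1   :: "'o \<Rightarrow> 'a"
  comp1 :: "'a \<Rightarrow> 'a \<Rightarrow> 'a"
  id2   :: "'a \<Rightarrow> 'c"
  vcomp :: "'c \<Rightarrow> 'c \<Rightarrow> 'c"
  hcomp :: "'c \<Rightarrow> 'c \<Rightarrow> 'c"

definition two_category :: "('o, 'a, 'c) twocat \<Rightarrow> bool" where
  "two_category C \<longleftrightarrow>
     \<comment> \<open>underlying category of objects and 1-cells\<close>
     (\<forall>x y. (x \<notin> obj C \<or> y \<notin> obj C) \<longrightarrow> hom1 C x y = {}) \<and>
     (\<forall>x y x' y' f. f \<in> hom1 C x y \<and> f \<in> hom1 C x' y' \<longrightarrow> x = x' \<and> y = y') \<and>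
     (\<forall>x \<in> obj C. id1 C x \<in> hom1 C x x) \<and>
     (\<forall>x y z f g. f \<in> hom1 C y z \<and> g \<in> hom1 C x y \<longrightarrow> comp1 C f g \<in> hom1 C x z) \<and>
     (\<forall>x y z w f g k. f \<in> hom1 C z w \<and> g \<in> hom1 C y z \<and> k \<in> hom1 C x y \<longrightarrow>
        comp1 C (comp1 C f g) k = comp1 C f (comp1 C g k)) \<and>
     (\<forall>x y f. f \<in> hom1 C x y \<longrightarrow> comp1 C (id1 C y) f = f \<and> comp1 C f (id1 C x) = f) \<and>
     \<comment> \<open>hom-categories\<close>
     (\<forall>f g. hom2 C f g \<noteq> {} \<longrightarrow> (\<exists>x y. f \<in> hom1 C x y \<and> g \<in> hom1 C x y)) \<and>
     (\<forall>f g f' g' \<theta>. \<theta> \<in> hom2 C f g \<and> \<theta> \<in> hom2 C f' g' \<longrightarrow> f = f' \<and> g = g') \<and>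
     (\<forall>x y f. f \<in> hom1 C x y \<longrightarrow> id2 C f \<in> hom2 C f f) \<and>
     (\<forall>f g k \<theta> \<eta>. \<theta> \<in> hom2 C g k \<and> \<eta> \<in> hom2 C f g \<longrightarrow> vcomp C \<theta> \<eta> \<in> hom2 C f k) \<and>
     (\<forall>f g k l \<theta> \<eta> \<zeta>. \<theta> \<in> hom2 C k l \<and> \<eta> \<in> hom2 C g k \<and> \<zeta> \<in> hom2 C f g \<longrightarrow>
        vcomp C (vcomp C \<theta> \<eta>) \<zeta> = vcomp C \<theta> (vcomp C \<eta> \<zeta>)) \<and>
     (\<forall>f g \<eta>. \<eta> \<in> hom2 C f g \<longrightarrow> vcomp C (id2 C g) \<eta> = \<eta> \<and> vcomp C \<eta> (id2 C f) = \<eta>) \<and>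
     \<comment> \<open>horizontal composition: a functor hom(y,z) x hom(x,y) -> hom(x,z)\<close>
     (\<forall>x y z f f' g g' \<xi> \<eta>. f \<in> hom1 C y z \<and> f' \<in> hom1 C y z \<and> g \<in> hom1 C x y \<and> g' \<in> hom1 C x y
        \<and> \<xi> \<in> hom2 C f f' \<and> \<eta> \<in> hom2 C g g' \<longrightarrow>
        hcomp C \<xi> \<eta> \<in> hom2 C (comp1 C f g) (comp1 C f' g')) \<and>
     (\<forall>x y z f g. f \<in> hom1 C y z \<and> g \<in> hom1 C x y \<longrightarrow>
        hcomp C (id2 C f) (id2 C g) = id2 C (comp1 C f g)) \<and>
     (\<forall>x y z f f' f'' g g' g'' \<xi> \<xi>' \<eta> \<eta>'.
        f \<in> hom1 C y z \<and> f' \<in> hom1 C y z \<and> f'' \<in> hom1 C y z \<and>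
        g \<in> hom1 C x y \<and> g' \<in> hom1 C x y \<and> g'' \<in> hom1 C x y \<and>
        \<xi> \<in> hom2 C f f' \<and> \<xi>' \<in> hom2 C f' f'' \<and> \<eta> \<in> hom2 C g g' \<and> \<eta>' \<in> hom2 C g' g'' \<longrightarrow>
        hcomp C (vcomp C \<xi>' \<xi>) (vcomp C \<eta>' \<eta>) = vcomp C (hcomp C \<xi>' \<eta>') (hcomp C \<xi> \<eta>)) \<and>
     \<comment> \<open>associativity and unit laws for horizontal composition\<close>
     (\<forall>x y z w f f' g g' k k' \<xi> \<eta> \<theta>.
        f \<in> hom1 C z w \<and> f' \<in> hom1 C z w \<and> g \<in> hom1 C y z \<and> g' \<in> hom1 C y z \<and>
        k \<in> hom1 C x y \<and> k' \<in> hom1 C x y \<and>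
        \<xi> \<in> hom2 C f f' \<and> \<eta> \<in> hom2 C g g' \<and> \<theta> \<in> hom2 C k k' \<longrightarrow>
        hcomp C (hcomp C \<xi> \<eta>) \<theta> = hcomp C \<xi> (hcomp C \<eta> \<theta>)) \<and>
     (\<forall>x y f f' \<eta>. f \<in> hom1 C x y \<and> f' \<in> hom1 C x y \<and> \<eta> \<in> hom2 C f f' \<longrightarrow>
        hcomp C (id2 C (id1 C y)) \<eta> = \<eta> \<and> hcomp C \<eta> (id2 C (id1 C x)) = \<eta>)"

text \<open>The canonical functor
  A(P,y) -> (triples) is an isomorphism of categories: bijective on objects and
  bijective on each hom-set.\<close>

definition opcomma ::
  "('o, 'a, 'c) twocat \<Rightarrow> 'o \<Rightarrow> 'o \<Rightarrow> 'o \<Rightarrow> 'a \<Rightarrow> 'a \<Rightarrow> 'o \<Rightarrow> 'a \<Rightarrow> 'a \<Rightarrow> 'c \<Rightarrow> bool" where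
  "opcomma C e b0 b1 p0 p1 P d0 d1 \<alpha> \<longleftrightarrow>
     P \<in> obj C \<and> d0 \<in> hom1 C b1 P \<and> d1 \<in> hom1 C b0 P \<and>
     \<alpha> \<in> hom2 C (comp1 C d1 p0) (comp1 C d0 p1) \<and>
     (\<forall>y \<in> obj C.
        bij_betw (\<lambda>h. (comp1 C h d0, comp1 C h d1, hcomp C (id2 C h) \<alpha>))
          (hom1 C P y)
          {(h0, h1, \<beta>). h0 \<in> hom1 C b1 y \<and> h1 \<in> hom1 C b0 y \<and>
                         \<beta> \<in> hom2 C (comp1 C h1 p0) (comp1 C h0 p1)} \<and>
        (\<forall>h \<in> hom1 C P y. \<forall>h' \<in> hom1 C P y.
           bij_betw (\<lambda>\<xi>. (hcomp C \<xi> (id2 C d0), hcomp C \<xi> (id2 C d1)))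
             (hom2 C h h')
             {(\<xi>0, \<xi>1). \<xi>0 \<in> hom2 C (comp1 C h d0) (comp1 C h' d0) \<and>
                         \<xi>1 \<in> hom2 C (comp1 C h d1) (comp1 C h' d1) \<and>
                         vcomp C (hcomp C \<xi>0 (id2 C p1)) (hcomp C (id2 C h) \<alpha>) =
                         vcomp C (hcomp C (id2 C h') \<alpha>) (hcomp C \<xi>1 (id2 C p0))}))"

definition right_kan ::
  "('o, 'a, 'c) twocat \<Rightarrow> 'o \<Rightarrow> 'o \<Rightarrow> 'o \<Rightarrow> 'a \<Rightarrow> 'a \<Rightarrow> 'a \<Rightarrow> 'c \<Rightarrow> bool" where
  "right_kan C z x y f g r \<gamma> \<longleftrightarrow>
     f \<in> hom1 C z y \<and> g \<in> hom1 C z x \<and> r \<in> hom1 C x y \<and>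
     \<gamma> \<in> hom2 C (comp1 C r g) f \<and>
     (\<forall>k \<in> hom1 C x y.
        bij_betw (\<lambda>\<beta>. vcomp C \<gamma> (hcomp C \<beta> (id2 C g))) (hom2 C k r) (hom2 C (comp1 C k g) f))"

end

(* By the 2-dimensional universal property of the opcomma object, a 2-cell xi : k => h is the
   same as a pair xi0 : k d0 => h d0, xi1 : k d1 => h d1 with (xi0 p1) . (k alpha) = (h alpha) . (xi1 p0).
   Condition (ii) says that xi1 is uniquely determined by the left-hand side, so under (ii) the
   map xi |-> xi d0 is bijective, which is (i).  Conversely, by the 1-dimensional property a
   2-cell theta : k' p0 => h d0 p1 is k alpha for a unique k with k d0 = h d0 and k d1 = k'; the
   solutions beta of (h alpha) . (beta p0) = theta are then the xi d1 with xi : k => h and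
   xi d0 = id, and (i) says there is exactly one such xi. *)

theory Submission
  imports Defs
begin

lemma bij_betw_iff_ex1:
  "bij_betw f A B \<longleftrightarrow> f ` A \<subseteq> B \<and> (\<forall>y\<in>B. \<exists>!x\<in>A. f x = y)"
proof
  assume bij: "bij_betw f A B"
  show "f ` A \<subseteq> B \<and> (\<forall>y\<in>B. \<exists>!x\<in>A. f x = y)"
  proof (intro conjI ballI)
    show "f ` A \<subseteq> B"
      using bij by (simp add: bij_betw_def)
  next
    fix y assume "y \<in> B"
    then obtain x where "x \<in> A" "f x = y"
      using bij by (auto simp: bij_betw_def)
    with bij show "\<exists>!x\<in>A. f x = y"
      by (auto simp: bij_betw_def dest: inj_onD)
  qed
next
  assume ex1: "f ` A \<subseteq> B \<and> (\<forall>y\<in>B. \<exists>!x\<in>A. f x = y)"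
  show "bij_betw f A B"
    unfolding bij_betw_def
  proof
    show "inj_on f A"
    proof (rule inj_onI)
      fix x x' assume "x \<in> A" "x' \<in> A" "f x = f x'"
      moreover have "f x \<in> B"
        using ex1 \<open>x \<in> A\<close> by blast
      ultimately show "x = x'"
        using ex1 by metis
    qed
    show "f ` A = B"
      using ex1 by fast
  qed
qed

lemma bij_betw_fst_of_bij_betw_fiber_product:
  assumes \<Phi>: "bij_betw (\<lambda>x. (\<phi>0 x, \<phi>1 x)) X {(a, b). a \<in> A \<and> b \<in> B \<and> g a = f b}"
    and f: "bij_betw f B T" and g: "g ` A \<subseteq> T"
  shows "bij_betw \<phi>0 X A"
proof -
  let ?G = "{(a, b). a \<in> A \<and> b \<in> B \<and> g a = f b}"
  have "bij_betw fst ?G A"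
    unfolding bij_betw_iff_ex1
  proof (intro conjI ballI)
    show "fst ` ?G \<subseteq> A"
      by auto
  next
    fix a assume a: "a \<in> A"
    with g have "g a \<in> T"
      by blast
    with f have "\<exists>!b. b \<in> B \<and> f b = g a"
      unfolding bij_betw_iff_ex1 by blast
    then obtain b where b: "b \<in> B" "f b = g a" and uniq: "\<And>b'. b' \<in> B \<and> f b' = g a \<Longrightarrow> b' = b"
      by (elim ex1E) blast
    show "\<exists>!p\<in>?G. fst p = a"
    proof (rule ex1I[of _ "(a, b)"])
      show "(a, b) \<in> ?G \<and> fst (a, b) = a"
        using a b by simp
    next
      fix p assume "p \<in> ?G \<and> fst p = a"
      then show "p = (a, b)"
        using uniq by (cases p) auto
    qed
  qed
  from bij_betw_trans[OF \<Phi> this] show ?thesis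
    by (simp add: comp_def)
qed

lemma ex1_of_bij_betw_fiber_product:
  assumes \<Phi>: "bij_betw (\<lambda>x. (\<phi>0 x, \<phi>1 x)) X {(a, b). a \<in> A \<and> b \<in> B \<and> g a = f b}"
    and \<phi>0: "bij_betw \<phi>0 X A" and "a \<in> A"
  shows "\<exists>!b\<in>B. f b = g a"
proof -
  obtain x where "x \<in> X" "\<phi>0 x = a"
    using \<phi>0 \<open>a \<in> A\<close> by (auto simp: bij_betw_def)
  show ?thesis
  proof (rule ex1I[of _ "\<phi>1 x"])
    have "(\<phi>0 x, \<phi>1 x) \<in> {(a, b). a \<in> A \<and> b \<in> B \<and> g a = f b}"
      using \<Phi> \<open>x \<in> X\<close> by (rule bij_betw_apply)
    then show "\<phi>1 x \<in> B \<and> f (\<phi>1 x) = g a"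
      using \<open>\<phi>0 x = a\<close> by simp
  next
    fix b assume b: "b \<in> B \<and> f b = g a"
    then have "(a, b) \<in> (\<lambda>x. (\<phi>0 x, \<phi>1 x)) ` X"
      using \<Phi> \<open>a \<in> A\<close> by (simp add: bij_betw_def)
    then obtain x' where "x' \<in> X" "\<phi>0 x' = a" "\<phi>1 x' = b"
      by auto
    with \<phi>0 \<open>x \<in> X\<close> \<open>\<phi>0 x = a\<close> show "b = \<phi>1 x"
      by (metis bij_betw_def inj_onD)
  qed
qed

locale two_cat =
  fixes C :: "('o, 'a, 'c) twocat"
  assumes two_category: "two_category C"
begin

lemma comp1_in_hom1: "f \<in> hom1 C y z \<Longrightarrow> g \<in> hom1 C x y \<Longrightarrow> comp1 C f g \<in> hom1 C x z"
  using two_category unfolding two_category_def by (elim conjE) meson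

lemma comp1_assoc:
  "f \<in> hom1 C z w \<Longrightarrow> g \<in> hom1 C y z \<Longrightarrow> k \<in> hom1 C x y \<Longrightarrow>
   comp1 C (comp1 C f g) k = comp1 C f (comp1 C g k)"
  using two_category unfolding two_category_def by (elim conjE) meson

lemma id2_in_hom2: "f \<in> hom1 C x y \<Longrightarrow> id2 C f \<in> hom2 C f f"
  using two_category unfolding two_category_def by (elim conjE) meson

lemma vcomp_in_hom2: "\<theta> \<in> hom2 C g k \<Longrightarrow> \<eta> \<in> hom2 C f g \<Longrightarrow> vcomp C \<theta> \<eta> \<in> hom2 C f k"
  using two_category unfolding two_category_def by (elim conjE) meson

lemma vcomp_id2_left: "\<eta> \<in> hom2 C f g \<Longrightarrow> vcomp C (id2 C g) \<eta> = \<eta>"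
  using two_category unfolding two_category_def by (elim conjE) meson

lemma hcomp_in_hom2:
  "f \<in> hom1 C y z \<Longrightarrow> f' \<in> hom1 C y z \<Longrightarrow> g \<in> hom1 C x y \<Longrightarrow> g' \<in> hom1 C x y \<Longrightarrow>
   \<xi> \<in> hom2 C f f' \<Longrightarrow> \<eta> \<in> hom2 C g g' \<Longrightarrow> hcomp C \<xi> \<eta> \<in> hom2 C (comp1 C f g) (comp1 C f' g')"
  using two_category unfolding two_category_def by (elim conjE) meson

lemma hcomp_id2_id2:
  "f \<in> hom1 C y z \<Longrightarrow> g \<in> hom1 C x y \<Longrightarrow> hcomp C (id2 C f) (id2 C g) = id2 C (comp1 C f g)"
  using two_category unfolding two_category_def by (elim conjE) meson

lemma hcomp_id2_right_in_hom2:
  assumes "f \<in> hom1 C y z" and "f' \<in> hom1 C y z" and g: "g \<in> hom1 C x y" and "\<xi> \<in> hom2 C f f'"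
  shows "hcomp C \<xi> (id2 C g) \<in> hom2 C (comp1 C f g) (comp1 C f' g)"
  using hcomp_in_hom2[OF assms(1,2) g g assms(4) id2_in_hom2[OF g]] .

lemma right_kan_id2_iff:
  assumes g: "g \<in> hom1 C z x" and r: "r \<in> hom1 C x y"
  shows "right_kan C z x y (comp1 C r g) g r (id2 C (comp1 C r g)) \<longleftrightarrow>
    (\<forall>k\<in>hom1 C x y.
       bij_betw (\<lambda>\<beta>. hcomp C \<beta> (id2 C g)) (hom2 C k r) (hom2 C (comp1 C k g) (comp1 C r g)))"
proof -
  have rg: "comp1 C r g \<in> hom1 C z y"
    using r g by (rule comp1_in_hom1)
  have "bij_betw (\<lambda>\<beta>. vcomp C (id2 C (comp1 C r g)) (hcomp C \<beta> (id2 C g)))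
          (hom2 C k r) (hom2 C (comp1 C k g) (comp1 C r g)) \<longleftrightarrow>
        bij_betw (\<lambda>\<beta>. hcomp C \<beta> (id2 C g)) (hom2 C k r) (hom2 C (comp1 C k g) (comp1 C r g))"
    if k: "k \<in> hom1 C x y" for k
    using vcomp_id2_left[OF hcomp_id2_right_in_hom2[OF k r g]] by (intro bij_betw_cong) simp
  then show ?thesis
    unfolding right_kan_def using rg g r id2_in_hom2[OF rg] by auto
qed

end

locale opcomma_object = two_cat C for C :: "('o, 'a, 'c) twocat" +
  fixes e b0 b1 :: 'o and p0 p1 :: 'a and P :: 'o and d0 d1 :: 'a and \<alpha> :: 'c
  assumes p0: "p0 \<in> hom1 C e b0" and p1: "p1 \<in> hom1 C e b1"
    and opcomma: "opcomma C e b0 b1 p0 p1 P d0 d1 \<alpha>"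
begin

lemma d0: "d0 \<in> hom1 C b1 P" and d1: "d1 \<in> hom1 C b0 P"
  and \<alpha>: "\<alpha> \<in> hom2 C (comp1 C d1 p0) (comp1 C d0 p1)"
  using opcomma unfolding opcomma_def by auto

lemma whisker_\<alpha>_in_hom2:
  assumes k: "k \<in> hom1 C P y"
  shows "hcomp C (id2 C k) \<alpha> \<in> hom2 C (comp1 C (comp1 C k d1) p0) (comp1 C (comp1 C k d0) p1)"
  using hcomp_in_hom2[OF k k comp1_in_hom1[OF d1 p0]
      comp1_in_hom1[OF d0 p1] id2_in_hom2[OF k] \<alpha>]
  by (simp add: comp1_assoc[OF k d1 p0] comp1_assoc[OF k d0 p1])

lemma ex_1cell_of_triple:
  assumes "y \<in> obj C" and "h0 \<in> hom1 C b1 y" and "h1 \<in> hom1 C b0 y"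
    and "\<beta> \<in> hom2 C (comp1 C h1 p0) (comp1 C h0 p1)"
  obtains k where "k \<in> hom1 C P y" and "comp1 C k d0 = h0" and "comp1 C k d1 = h1"
    and "hcomp C (id2 C k) \<alpha> = \<beta>"
proof -
  have "(h0, h1, \<beta>) \<in> (\<lambda>k. (comp1 C k d0, comp1 C k d1, hcomp C (id2 C k) \<alpha>)) ` hom1 C P y"
    using opcomma assms unfolding opcomma_def bij_betw_def by auto
  with that show thesis
    by auto
qed

lemma bij_betw_2cells_compatible_pairs:
  assumes "y \<in> obj C" and "k \<in> hom1 C P y" and "k' \<in> hom1 C P y"
  shows "bij_betw (\<lambda>\<xi>. (hcomp C \<xi> (id2 C d0), hcomp C \<xi> (id2 C d1))) (hom2 C k k')
    {(\<xi>0, \<xi>1). \<xi>0 \<in> hom2 C (comp1 C k d0) (comp1 C k' d0) \<and>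
               \<xi>1 \<in> hom2 C (comp1 C k d1) (comp1 C k' d1) \<and>
               vcomp C (hcomp C \<xi>0 (id2 C p1)) (hcomp C (id2 C k) \<alpha>) =
               vcomp C (hcomp C (id2 C k') \<alpha>) (hcomp C \<xi>1 (id2 C p0))}"
  using opcomma assms unfolding opcomma_def by blast

lemma whisker_d0_bij_if_bij_along_p0:
  assumes y: "y \<in> obj C" and h: "h \<in> hom1 C P y" and k: "k \<in> hom1 C P y"
    and kan: "bij_betw (\<lambda>\<beta>. vcomp C (hcomp C (id2 C h) \<alpha>) (hcomp C \<beta> (id2 C p0)))
      (hom2 C (comp1 C k d1) (comp1 C h d1))
      (hom2 C (comp1 C (comp1 C k d1) p0) (comp1 C (comp1 C h d0) p1))"
  shows "bij_betw (\<lambda>\<beta>. hcomp C \<beta> (id2 C d0)) (hom2 C k h) (hom2 C (comp1 C k d0) (comp1 C h d0))"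
proof (rule bij_betw_fst_of_bij_betw_fiber_product[OF bij_betw_2cells_compatible_pairs[OF y k h] kan])
  have kd0: "comp1 C k d0 \<in> hom1 C b1 y" and hd0: "comp1 C h d0 \<in> hom1 C b1 y"
    using k h d0 by (auto intro: comp1_in_hom1)
  show "(\<lambda>\<xi>0. vcomp C (hcomp C \<xi>0 (id2 C p1)) (hcomp C (id2 C k) \<alpha>)) ` hom2 C (comp1 C k d0) (comp1 C h d0)
      \<subseteq> hom2 C (comp1 C (comp1 C k d1) p0) (comp1 C (comp1 C h d0) p1)"
    using vcomp_in_hom2[OF hcomp_id2_right_in_hom2[OF kd0 hd0 p1] whisker_\<alpha>_in_hom2[OF k]] by blast
qed

lemma bij_along_p0_if_whisker_d0_bij:
  assumes y: "y \<in> obj C" and h: "h \<in> hom1 C P y" and k': "k' \<in> hom1 C b0 y"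
    and whisker_bij: "\<And>k. k \<in> hom1 C P y \<Longrightarrow>
      bij_betw (\<lambda>\<beta>. hcomp C \<beta> (id2 C d0)) (hom2 C k h) (hom2 C (comp1 C k d0) (comp1 C h d0))"
  shows "bij_betw (\<lambda>\<beta>. vcomp C (hcomp C (id2 C h) \<alpha>) (hcomp C \<beta> (id2 C p0)))
    (hom2 C k' (comp1 C h d1)) (hom2 C (comp1 C k' p0) (comp1 C (comp1 C h d0) p1))"
  unfolding bij_betw_iff_ex1
proof (intro conjI ballI)
  have hd0: "comp1 C h d0 \<in> hom1 C b1 y" and hd1: "comp1 C h d1 \<in> hom1 C b0 y"
    using h d0 d1 by (auto intro: comp1_in_hom1)
  show "(\<lambda>\<beta>. vcomp C (hcomp C (id2 C h) \<alpha>) (hcomp C \<beta> (id2 C p0))) ` hom2 C k' (comp1 C h d1)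
      \<subseteq> hom2 C (comp1 C k' p0) (comp1 C (comp1 C h d0) p1)"
    using vcomp_in_hom2[OF whisker_\<alpha>_in_hom2[OF h] hcomp_id2_right_in_hom2[OF k' hd1 p0]] by blast
  fix \<theta> assume \<theta>: "\<theta> \<in> hom2 C (comp1 C k' p0) (comp1 C (comp1 C h d0) p1)"
  obtain k where k: "k \<in> hom1 C P y" and kd0: "comp1 C k d0 = comp1 C h d0"
    and kd1: "comp1 C k d1 = k'" and k\<alpha>: "hcomp C (id2 C k) \<alpha> = \<theta>"
    using ex_1cell_of_triple[OF y hd0 k' \<theta>] .
  have "\<exists>!\<beta>\<in>hom2 C (comp1 C k d1) (comp1 C h d1).
      vcomp C (hcomp C (id2 C h) \<alpha>) (hcomp C \<beta> (id2 C p0))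
      = vcomp C (hcomp C (id2 C (comp1 C h d0)) (id2 C p1)) (hcomp C (id2 C k) \<alpha>)"
    by (rule ex1_of_bij_betw_fiber_product[OF bij_betw_2cells_compatible_pairs[OF y k h] whisker_bij[OF k]])
      (simp add: kd0 id2_in_hom2[OF hd0])
  moreover have "vcomp C (hcomp C (id2 C (comp1 C h d0)) (id2 C p1)) (hcomp C (id2 C k) \<alpha>) = \<theta>"
    using hcomp_id2_id2[OF hd0 p1] vcomp_id2_left[OF \<theta>] k\<alpha> by simp
  ultimately show "\<exists>!\<beta>\<in>hom2 C k' (comp1 C h d1).
      vcomp C (hcomp C (id2 C h) \<alpha>) (hcomp C \<beta> (id2 C p0)) = \<theta>"
    using kd1 by simp
qed

end

theorem lemma3p5:
  fixes C :: "('o, 'a, 'c) twocat"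
  assumes "two_category C"
    and "e \<in> obj C" and "b0 \<in> obj C" and "b1 \<in> obj C"
    and "p0 \<in> hom1 C e b0" and "p1 \<in> hom1 C e b1"
    and "opcomma C e b0 b1 p0 p1 P d0 d1 \<alpha>"
    and "y \<in> obj C" and "h \<in> hom1 C P y"
  shows "right_kan C b1 P y (comp1 C h d0) d0 h (id2 C (comp1 C h d0))
     \<longleftrightarrow> right_kan C e b0 y (comp1 C (comp1 C h d0) p1) p0 (comp1 C h d1) (hcomp C (id2 C h) \<alpha>)"
proof -
  interpret opcomma_object C e b0 b1 p0 p1 P d0 d1 \<alpha>
    using assms by (simp add: opcomma_object_def opcomma_object_axioms_def two_cat_def)
  note y = \<open>y \<in> obj C\<close> and h = \<open>h \<in> hom1 C P y\<close>
  have "right_kan C b1 P y (comp1 C h d0) d0 h (id2 C (comp1 C h d0)) \<longleftrightarrow>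
    (\<forall>k\<in>hom1 C P y.
       bij_betw (\<lambda>\<beta>. hcomp C \<beta> (id2 C d0)) (hom2 C k h) (hom2 C (comp1 C k d0) (comp1 C h d0)))"
    by (rule right_kan_id2_iff[OF d0 h])
  also have "\<dots> \<longleftrightarrow> (\<forall>k'\<in>hom1 C b0 y.
       bij_betw (\<lambda>\<beta>. vcomp C (hcomp C (id2 C h) \<alpha>) (hcomp C \<beta> (id2 C p0)))
         (hom2 C k' (comp1 C h d1)) (hom2 C (comp1 C k' p0) (comp1 C (comp1 C h d0) p1)))"
    using whisker_d0_bij_if_bij_along_p0[OF y h] bij_along_p0_if_whisker_d0_bij[OF y h]
      comp1_in_hom1[OF _ d1] by meson
  also have "\<dots> \<longleftrightarrow>
    right_kan C e b0 y (comp1 C (comp1 C h d0) p1) p0 (comp1 C h d1) (hcomp C (id2 C h) \<alpha>)"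
    unfolding right_kan_def
    using p0 h d0 d1 p1 whisker_\<alpha>_in_hom2[OF h] by (auto intro: comp1_in_hom1)
  finally show ?thesis .
qed

end
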